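(* Let $G$ be a group regarded as a large scale group whose bornology consists of all finite subsets of $G$. If $G$ has exactly two ends, then $G$ is finitely generated, and consequently $G$ contains an infinite cyclic subgroup of finite index.
   Context: For a group $G$ with the bornology of all finite subsets, the uniformly bounded covers are the covers refining $\{gF\}_{g\in G}$ for some finite $F\subseteq G$, and the bounded sets are the finite sets. For $A\subseteq G$ and a cover $\mathcal U$, $st(A,\mathcal U)$ is the union of members of $\mathcal U$ meeting $A$; $A$ is coarsely clopen if $st(A,\mathcal U)\cap st(G\setminus A,\mathcal U)$ is finite for every uniformly bounded $\mathcal U$. An end of $G$ is a family of infinite coarsely clopen subsets of $G$ maximal with respect to the property that all finite intersections of its members are infinite. *)

theory Defs
  imports "HOL-Algebra.Algebra"
begin

definition is_cover :: "('a, 'b) monoid_scheme \<Rightarrow> 'a set set \<Rightarrow> bool" where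
  "is_cover G \<U> \<longleftrightarrow> (\<forall>U\<in>\<U>. U \<subseteq> carrier G) \<and> \<Union>\<U> = carrier G"

definition unif_bounded_cover :: "('a, 'b) monoid_scheme \<Rightarrow> 'a set set \<Rightarrow> bool" where
  "unif_bounded_cover G \<U> \<longleftrightarrow> is_cover G \<U> \<and>
     (\<exists>F. finite F \<and> F \<subseteq> carrier G \<and>
        (\<forall>U\<in>\<U>. \<exists>g\<in>carrier G. U \<subseteq> g <#\<^bsub>G\<^esub> F))"

definition star :: "'a set \<Rightarrow> 'a set set \<Rightarrow> 'a set" where
  "star A \<U> = \<Union>{U\<in>\<U>. U \<inter> A \<noteq> {}}"

definition coarsely_clopen :: "('a, 'b) monoid_scheme \<Rightarrow> 'a set \<Rightarrow> bool" where
  "coarsely_clopen G A \<longleftrightarrow> A \<subseteq> carrier G \<and>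
     (\<forall>\<U>. unif_bounded_cover G \<U> \<longrightarrow> finite (star A \<U> \<inter> star (carrier G - A) \<U>))"

definition end_candidate :: "('a, 'b) monoid_scheme \<Rightarrow> 'a set set \<Rightarrow> bool" where
  "end_candidate G \<E> \<longleftrightarrow>
     (\<forall>A\<in>\<E>. infinite A \<and> coarsely_clopen G A) \<and>
     (\<forall>\<F>. \<F> \<subseteq> \<E> \<and> finite \<F> \<and> \<F> \<noteq> {} \<longrightarrow> infinite (\<Inter>\<F>))"

definition is_end :: "('a, 'b) monoid_scheme \<Rightarrow> 'a set set \<Rightarrow> bool" where
  "is_end G \<E> \<longleftrightarrow> \<E> \<noteq> {} \<and> end_candidate G \<E> \<and>
     (\<forall>\<E>'. end_candidate G \<E>' \<and> \<E> \<subseteq> \<E>' \<longrightarrow> \<E>' = \<E>)"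

definition ends :: "('a, 'b) monoid_scheme \<Rightarrow> 'a set set set" where
  "ends G = {\<E>. is_end G \<E>}"

end

theory Submission
  imports Defs
begin

(* Coarsely clopen sets are exactly the sets A with A t \<triangle> A finite for all t. If G has two ends,
  some such E with E and G - E infinite splits them: any other such set is, up to a finite set,
  empty, G, E or G - E, since otherwise three disjoint infinite ones would produce three ends.
  So every translate z E is almost equal to E or to G - E; the z of the first kind form a subgroup
  H of index at most 2, and the displacement |z E - E| - |E - z E| is a homomorphism from H to \<int>.
  Its kernel is finite: for z outside E, |E - z E| takes finitely many values (its level sets are
  again almost invariant), while |z E - E| exceeds any bound for all but finitely many z.
  Hence an element of least positive displacement generates an infinite cyclic subgroup of finite
  index in H, and so in G; together with finitely many coset representatives it generates G. *)

section \<open>Symmetric differences and relative cardinality\<close>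

lemma finite_sym_diff_trans:
  "finite (sym_diff A B) \<Longrightarrow> finite (sym_diff B C) \<Longrightarrow> finite (sym_diff A C)"
  by (rule finite_subset[of _ "sym_diff A B \<union> sym_diff B C"]) auto

lemma finite_sym_diff_commute: "finite (sym_diff A B) \<longleftrightarrow> finite (sym_diff B A)"
  by (simp add: Un_commute)

lemma sym_diff_Diff_Diff: "A \<subseteq> C \<Longrightarrow> B \<subseteq> C \<Longrightarrow> sym_diff (C - A) (C - B) = sym_diff A B"
  by auto

lemma infinite_split:
  assumes "infinite V"
  shows "\<exists>J\<subseteq>V. infinite J \<and> infinite (V - J)"
proof -
  obtain f :: "nat \<Rightarrow> 'a" where f: "inj f" "range f \<subseteq> V"
    using infinite_countable_subset assms by blast
  have evens: "infinite {n::nat. even n}"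
    unfolding infinite_nat_iff_unbounded_le by (intro allI, rule_tac x = "2 * m" in exI) auto
  have odds: "infinite {n::nat. odd n}"
    unfolding infinite_nat_iff_unbounded_le by (intro allI, rule_tac x = "2 * m + 1" in exI) auto
  have "f ` {n. odd n} \<subseteq> V - f ` {n. even n}"
    using f by (auto simp: inj_eq)
  moreover have "infinite (f ` {n. odd n})" "infinite (f ` {n. even n})"
    using evens odds f(1) by (auto simp: finite_image_iff inj_on_subset)
  ultimately show ?thesis
    using f(2) by (intro exI[of _ "f ` {n. even n}"]) (auto dest: finite_subset)
qed

definition rel_card :: "'a set \<Rightarrow> 'a set \<Rightarrow> int" where
  "rel_card P Q = int (card (P - Q)) - int (card (Q - P))"

lemma rel_card_eq_within:
  assumes "finite W" "sym_diff P Q \<subseteq> W"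
  shows "rel_card P Q = int (card (P \<inter> W)) - int (card (Q \<inter> W))"
proof -
  have "P \<inter> W = (P - Q) \<union> (P \<inter> Q \<inter> W)" "Q \<inter> W = (Q - P) \<union> (P \<inter> Q \<inter> W)"
    using assms(2) by auto
  moreover have "finite (P - Q)" "finite (Q - P)" "finite (P \<inter> Q \<inter> W)"
    using assms by (auto intro: finite_subset)
  ultimately have "card (P \<inter> W) = card (P - Q) + card (P \<inter> Q \<inter> W)"
    "card (Q \<inter> W) = card (Q - P) + card (P \<inter> Q \<inter> W)"
    by (metis Diff_disjoint Int_Diff Int_commute card_Un_disjoint inf_left_commute)+
  thus ?thesis by (simp add: rel_card_def)
qed

lemma rel_card_trans:
  assumes "finite (sym_diff P Q)" "finite (sym_diff Q R)"
  shows "rel_card P R = rel_card P Q + rel_card Q R"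
proof -
  define W where "W = sym_diff P Q \<union> sym_diff Q R"
  have "finite W" using assms by (simp add: W_def)
  moreover have "sym_diff P Q \<subseteq> W" "sym_diff Q R \<subseteq> W" "sym_diff P R \<subseteq> W"
    by (auto simp: W_def)
  ultimately show ?thesis by (simp add: rel_card_eq_within)
qed

lemma rel_card_Diff_Diff:
  assumes "P \<subseteq> C" "Q \<subseteq> C"
  shows "rel_card (C - P) (C - Q) = - rel_card P Q"
proof -
  have "(C - P) - (C - Q) = Q - P" "(C - Q) - (C - P) = P - Q" using assms by auto
  thus ?thesis by (simp add: rel_card_def)
qed

section \<open>Almost invariant sets\<close>

definition coboundary :: "('a, 'b) monoid_scheme \<Rightarrow> 'a set \<Rightarrow> 'a \<Rightarrow> 'a set" where
  "coboundary G A t = {x \<in> carrier G. (x \<in> A) \<noteq> (x \<otimes>\<^bsub>G\<^esub> t \<in> A)}"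

definition almost_invariant :: "('a, 'b) monoid_scheme \<Rightarrow> 'a set \<Rightarrow> bool" where
  "almost_invariant G A \<longleftrightarrow> A \<subseteq> carrier G \<and> (\<forall>t\<in>carrier G. finite (coboundary G A t))"

context group
begin

lemma l_coset_eq_image: "z <# A = (\<lambda>x. z \<otimes> x) ` A"
  by (auto simp: l_coset_def)

lemma mem_l_coset_iff:
  "z \<in> carrier G \<Longrightarrow> x \<in> carrier G \<Longrightarrow> A \<subseteq> carrier G \<Longrightarrow> x \<in> z <# A \<longleftrightarrow> inv z \<otimes> x \<in> A"
  by (force simp: l_coset_def m_assoc[symmetric])

lemma inj_on_l_coset: "z \<in> carrier G \<Longrightarrow> inj_on (\<lambda>x. z \<otimes> x) (carrier G)"
  by (auto simp: inj_on_def)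

lemma card_l_coset: "z \<in> carrier G \<Longrightarrow> A \<subseteq> carrier G \<Longrightarrow> card (z <# A) = card A"
  by (metis card_image inj_on_l_coset inj_on_subset l_coset_eq_image)

lemma finite_l_coset_iff: "z \<in> carrier G \<Longrightarrow> A \<subseteq> carrier G \<Longrightarrow> finite (z <# A) \<longleftrightarrow> finite A"
  by (metis finite_image_iff inj_on_l_coset inj_on_subset l_coset_eq_image)

lemma l_coset_Diff:
  "z \<in> carrier G \<Longrightarrow> A \<subseteq> carrier G \<Longrightarrow> B \<subseteq> carrier G \<Longrightarrow> z <# (A - B) = (z <# A) - (z <# B)"
  by (auto simp: l_coset_eq_image subset_iff)

lemma l_coset_carrier_eq: "z \<in> carrier G \<Longrightarrow> z <# carrier G = carrier G"
  using l_coset_subset_G[of "carrier G" z] by (auto simp: mem_l_coset_iff)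

lemma l_coset_compl:
  "z \<in> carrier G \<Longrightarrow> A \<subseteq> carrier G \<Longrightarrow> z <# (carrier G - A) = carrier G - (z <# A)"
  by (simp add: l_coset_Diff l_coset_carrier_eq)

lemma l_coset_sym_diff:
  "z \<in> carrier G \<Longrightarrow> A \<subseteq> carrier G \<Longrightarrow> B \<subseteq> carrier G
    \<Longrightarrow> z <# (sym_diff A B) = sym_diff (z <# A) (z <# B)"
  by (simp add: l_coset_Diff image_Un l_coset_eq_image[symmetric] l_coset_eq_image[of z "_ \<union> _"])

lemma finite_sym_diff_l_coset_iff:
  "z \<in> carrier G \<Longrightarrow> A \<subseteq> carrier G \<Longrightarrow> B \<subseteq> carrier G
    \<Longrightarrow> finite (sym_diff (z <# A) (z <# B)) \<longleftrightarrow> finite (sym_diff A B)"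
  using finite_l_coset_iff[of z "sym_diff A B"] by (auto simp: l_coset_sym_diff[symmetric])

lemma rel_card_l_coset:
  assumes "z \<in> carrier G" "P \<subseteq> carrier G" "Q \<subseteq> carrier G"
  shows "rel_card (z <# P) (z <# Q) = rel_card P Q"
proof -
  have "P - Q \<subseteq> carrier G" "Q - P \<subseteq> carrier G" using assms by auto
  thus ?thesis using assms by (simp add: rel_card_def l_coset_Diff[symmetric] card_l_coset)
qed

lemma almost_invariant_if_coarsely_clopen:
  assumes "coarsely_clopen G A"
  shows "almost_invariant G A"
  unfolding almost_invariant_def
proof (intro conjI ballI)
  show "A \<subseteq> carrier G" using assms by (simp add: coarsely_clopen_def)
  fix t assume t: "t \<in> carrier G"
  define \<U> where "\<U> = (\<lambda>g. {g, g \<otimes> t}) ` carrier G"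
  have "unif_bounded_cover G \<U>"
    unfolding unif_bounded_cover_def is_cover_def
  proof (intro conjI exI[of _ "{\<one>, t}"])
    show "\<forall>U\<in>\<U>. \<exists>g\<in>carrier G. U \<subseteq> g <# {\<one>, t}"
      using t by (auto simp: \<U>_def l_coset_def)
  qed (use t in \<open>auto simp: \<U>_def\<close>)
  hence "finite (star A \<U> \<inter> star (carrier G - A) \<U>)"
    using assms by (simp add: coarsely_clopen_def)
  moreover have "coboundary G A t \<subseteq> star A \<U> \<inter> star (carrier G - A) \<U>"
    using t by (auto simp: coboundary_def star_def \<U>_def)
  ultimately show "finite (coboundary G A t)" by (rule finite_subset[rotated])
qed

lemma star_inter_star_subset:
  assumes A: "A \<subseteq> carrier G" and F: "F \<subseteq> carrier G"
    and \<U>F: "\<And>U. U \<in> \<U> \<Longrightarrow> \<exists>g\<in>carrier G. U \<subseteq> g <# F"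
    and D: "\<And>u v. u \<in> F \<Longrightarrow> v \<in> F \<Longrightarrow> inv u \<otimes> v \<in> D"
  shows "star A \<U> \<inter> star (carrier G - A) \<U>
    \<subseteq> (\<lambda>(x, d). x \<otimes> d) ` ((\<Union>d\<in>D. \<Union>e\<in>D. coboundary G A (d \<otimes> e)) \<times> D)"
proof
  fix y assume "y \<in> star A \<U> \<inter> star (carrier G - A) \<U>"
  then obtain U V a b where UV: "U \<in> \<U>" "V \<in> \<U>" "y \<in> U" "y \<in> V"
    and a: "a \<in> U" "a \<in> A" and b: "b \<in> V" "b \<notin> A"
    unfolding star_def by blast
  obtain g where g: "g \<in> carrier G" "U \<subseteq> g <# F" using \<U>F[OF UV(1)] by blast
  obtain h where h: "h \<in> carrier G" "V \<subseteq> h <# F" using \<U>F[OF UV(2)] by blast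
  obtain f1 f3 where f13: "f1 \<in> F" "f3 \<in> F" "y = g \<otimes> f1" "a = g \<otimes> f3"
    using g UV(3) a(1) unfolding l_coset_def by blast
  obtain f2 f4 where f24: "f2 \<in> F" "f4 \<in> F" "y = h \<otimes> f2" "b = h \<otimes> f4"
    using h UV(4) b(1) unfolding l_coset_def by blast
  have fc: "f1 \<in> carrier G" "f2 \<in> carrier G" "f3 \<in> carrier G" "f4 \<in> carrier G"
    using f13 f24 F by auto
  have ac: "a \<in> carrier G" and yc: "y \<in> carrier G"
    using a(2) A f13(3) g(1) fc by auto
  have "g = a \<otimes> inv f3" using f13(4) fc g(1) by (simp add: m_assoc)
  hence ya: "y = a \<otimes> (inv f3 \<otimes> f1)" using f13(3) ac fc by (simp add: m_assoc)
  have "h = y \<otimes> inv f2" using f24(3) fc h(1) by (simp add: m_assoc)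
  hence "b = y \<otimes> (inv f2 \<otimes> f4)" using f24(4) yc fc by (simp add: m_assoc)
  hence "b = a \<otimes> ((inv f3 \<otimes> f1) \<otimes> (inv f2 \<otimes> f4))"
    using ya ac fc by (simp add: m_assoc)
  moreover have "inv f3 \<otimes> f1 \<in> D" "inv f2 \<otimes> f4 \<in> D" using f13 f24 D by auto
  ultimately have "a \<in> (\<Union>d\<in>D. \<Union>e\<in>D. coboundary G A (d \<otimes> e))"
    using a(2) b(2) A by (auto simp: coboundary_def)
  thus "y \<in> (\<lambda>(x, d). x \<otimes> d) ` ((\<Union>d\<in>D. \<Union>e\<in>D. coboundary G A (d \<otimes> e)) \<times> D)"
    using ya \<open>inv f3 \<otimes> f1 \<in> D\<close> by force
qed

lemma coarsely_clopen_if_almost_invariant: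
  assumes A: "almost_invariant G A"
  shows "coarsely_clopen G A"
  unfolding coarsely_clopen_def
proof (intro conjI allI impI)
  show A_sub: "A \<subseteq> carrier G" using A by (simp add: almost_invariant_def)
  fix \<U> assume "unif_bounded_cover G \<U>"
  then obtain F where F: "finite F" "F \<subseteq> carrier G"
    and \<U>F: "\<And>U. U \<in> \<U> \<Longrightarrow> \<exists>g\<in>carrier G. U \<subseteq> g <# F"
    unfolding unif_bounded_cover_def by blast
  define D where "D = (\<lambda>(u, v). inv u \<otimes> v) ` (F \<times> F)"
  have D: "finite D" "D \<subseteq> carrier G" using F by (auto simp: D_def)
  have "inv u \<otimes> v \<in> D" if "u \<in> F" "v \<in> F" for u v using that by (auto simp: D_def)
  note star_inter_star_subset[OF A_sub F(2) \<U>F this]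
  moreover have "finite (\<Union>d\<in>D. \<Union>e\<in>D. coboundary G A (d \<otimes> e))"
    using D A by (auto simp: almost_invariant_def subsetD)
  ultimately show "finite (star A \<U> \<inter> star (carrier G - A) \<U>)"
    using D(1) by (meson finite_SigmaI finite_imageI finite_subset)
qed

lemma coarsely_clopen_iff_almost_invariant: "coarsely_clopen G A \<longleftrightarrow> almost_invariant G A"
  using almost_invariant_if_coarsely_clopen coarsely_clopen_if_almost_invariant by blast

lemma almost_invariant_compl:
  assumes "almost_invariant G A"
  shows "almost_invariant G (carrier G - A)"
proof -
  have "coboundary G (carrier G - A) t = coboundary G A t" if "t \<in> carrier G" for t
    using that by (auto simp: coboundary_def)
  thus ?thesis using assms by (simp add: almost_invariant_def)
qed

lemma almost_invariant_Int:
  assumes "almost_invariant G A" "almost_invariant G B"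
  shows "almost_invariant G (A \<inter> B)"
proof -
  have "coboundary G (A \<inter> B) t \<subseteq> coboundary G A t \<union> coboundary G B t" for t
    by (auto simp: coboundary_def)
  hence "finite (coboundary G (A \<inter> B) t)" if "t \<in> carrier G" for t
    using assms that unfolding almost_invariant_def by (meson finite_UnI finite_subset)
  thus ?thesis using assms by (auto simp: almost_invariant_def)
qed

lemma almost_invariant_l_coset:
  assumes A: "almost_invariant G A" and z: "z \<in> carrier G"
  shows "almost_invariant G (z <# A)"
proof -
  have A_sub: "A \<subseteq> carrier G" using A by (simp add: almost_invariant_def)
  have "coboundary G (z <# A) t \<subseteq> z <# coboundary G A t" if t: "t \<in> carrier G" for t
  proof
    fix x assume x: "x \<in> coboundary G (z <# A) t"
    hence "inv z \<otimes> x \<in> coboundary G A t"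
      using z t A_sub by (auto simp: coboundary_def mem_l_coset_iff m_assoc)
    moreover have "x = z \<otimes> (inv z \<otimes> x)"
      using x z by (simp add: coboundary_def m_assoc[symmetric])
    ultimately show "x \<in> z <# coboundary G A t"
      by (auto simp: l_coset_def)
  qed
  moreover have "finite (z <# coboundary G A t)" if "t \<in> carrier G" for t
    using A that by (simp add: almost_invariant_def l_coset_eq_image)
  ultimately show ?thesis
    using A_sub z by (auto simp: almost_invariant_def l_coset_subset_G intro: finite_subset)
qed

section \<open>Ends\<close>

lemma is_end_memD:
  "is_end G \<E> \<Longrightarrow> A \<in> \<E> \<Longrightarrow> infinite A \<and> almost_invariant G A"
  unfolding is_end_def end_candidate_def by (auto simp: coarsely_clopen_iff_almost_invariant)

lemma is_end_Inter_infinite: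
  "is_end G \<E> \<Longrightarrow> \<F> \<subseteq> \<E> \<Longrightarrow> finite \<F> \<Longrightarrow> \<F> \<noteq> {} \<Longrightarrow> infinite (\<Inter>\<F>)"
  unfolding is_end_def end_candidate_def by blast

lemma mem_end_if_Int_infinite:
  assumes \<E>: "is_end G \<E>" and A: "infinite A" "almost_invariant G A"
    and Int: "\<And>\<F>. \<F> \<subseteq> \<E> \<Longrightarrow> finite \<F> \<Longrightarrow> infinite (A \<inter> \<Inter>\<F>)"
  shows "A \<in> \<E>"
proof -
  have "infinite (\<Inter>\<F>)" if "\<F> \<subseteq> insert A \<E>" "finite \<F>" "\<F> \<noteq> {}" for \<F>
  proof (cases "A \<in> \<F>")
    case True
    hence "\<Inter>\<F> = A \<inter> \<Inter>(\<F> - {A})" by blast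
    thus ?thesis using Int[of "\<F> - {A}"] that by auto
  next
    case False
    thus ?thesis using is_end_Inter_infinite[OF \<E>] that by blast
  qed
  hence "end_candidate G (insert A \<E>)"
    using \<E> A unfolding is_end_def end_candidate_def
    by (auto simp: coarsely_clopen_iff_almost_invariant)
  thus ?thesis using \<E> unfolding is_end_def by blast
qed

lemma cofinite_mem_end:
  assumes \<E>: "is_end G \<E>" and A: "almost_invariant G A" "finite (carrier G - A)"
  shows "A \<in> \<E>"
proof (rule mem_end_if_Int_infinite[OF \<E> _ A(1)])
  obtain B where "B \<in> \<E>" using \<E> by (auto simp: is_end_def)
  hence "infinite (carrier G)"
    using is_end_memD[OF \<E>] by (meson almost_invariant_def finite_subset)
  thus "infinite A" using A(2) by (meson Diff_infinite_finite)
  fix \<F> assume \<F>: "\<F> \<subseteq> \<E>" "finite \<F>"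
  show "infinite (A \<inter> \<Inter>\<F>)"
  proof (cases "\<F> = {}")
    case True
    thus ?thesis using \<open>infinite A\<close> by simp
  next
    case False
    then obtain B where "B \<in> \<F>" by blast
    hence "B \<subseteq> carrier G" using \<F> is_end_memD[OF \<E>] by (auto simp: almost_invariant_def)
    hence "\<Inter>\<F> - (carrier G - A) \<subseteq> A \<inter> \<Inter>\<F>" using \<open>B \<in> \<F>\<close> by blast
    moreover have "infinite (\<Inter>\<F> - (carrier G - A))"
      using is_end_Inter_infinite[OF \<E> \<F> False] A(2) by simp
    ultimately show ?thesis by (meson finite_subset)
  qed
qed

lemma exists_end_containing:
  assumes "infinite A" "almost_invariant G A"
  shows "\<exists>\<E>. is_end G \<E> \<and> A \<in> \<E>"
proof -
  define \<C> where "\<C> = {\<E>. end_candidate G \<E> \<and> A \<in> \<E>}"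
  have singleton: "{A} \<in> \<C>"
    using assms by (auto simp: \<C>_def end_candidate_def coarsely_clopen_iff_almost_invariant
        subset_singleton_iff)
  have "\<Union>\<K> \<in> \<C>" if \<K>: "\<K> \<in> chains \<C>" "\<K> \<noteq> {}" for \<K>
  proof -
    have sub: "\<K> \<subseteq> \<C>" using \<K> by (simp add: chains_def)
    have chain: "subset.chain \<C> \<K>" using \<K> by (simp add: chains_alt_def)
    have "infinite (\<Inter>\<F>)" if \<F>: "\<F> \<subseteq> \<Union>\<K>" "finite \<F>" "\<F> \<noteq> {}" for \<F>
    proof -
      obtain \<E> where "\<E> \<in> \<K>" "\<F> \<subseteq> \<E>"
        using finite_subset_Union_chain[OF \<F>(2,1) \<K>(2) chain] .
      thus ?thesis using sub \<F> by (auto simp: \<C>_def end_candidate_def)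
    qed
    thus ?thesis using sub \<K>(2) by (auto simp: \<C>_def end_candidate_def)
  qed
  hence "\<forall>\<K>\<in>chains \<C>. \<exists>\<U>\<in>\<C>. \<forall>\<E>\<in>\<K>. \<E> \<subseteq> \<U>"
    using singleton by (metis Sup_upper empty_iff)
  then obtain \<M> where "\<M> \<in> \<C>" "\<forall>\<E>\<in>\<C>. \<M> \<subseteq> \<E> \<longrightarrow> \<E> = \<M>"
    using Zorn_Lemma2[of \<C>] by blast
  thus ?thesis by (auto simp: \<C>_def is_end_def)
qed

lemma three_disjoint_imp_three_ends:
  assumes "almost_invariant G A" "almost_invariant G B" "almost_invariant G C"
    and "infinite A" "infinite B" "infinite C"
    and "A \<inter> B = {}" "A \<inter> C = {}" "B \<inter> C = {}"
  shows "infinite (ends G) \<or> 3 \<le> card (ends G)"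
proof -
  have separate: "\<E> \<noteq> \<E>'"
    if "is_end G \<E>" "is_end G \<E>'" "P \<in> \<E>" "Q \<in> \<E>'" "P \<inter> Q = {}" for \<E> \<E>' P Q
    using that is_end_Inter_infinite[of \<E> "{P, Q}"] by auto
  obtain \<E>\<^sub>A \<E>\<^sub>B \<E>\<^sub>C where "is_end G \<E>\<^sub>A" "A \<in> \<E>\<^sub>A" "is_end G \<E>\<^sub>B" "B \<in> \<E>\<^sub>B"
    "is_end G \<E>\<^sub>C" "C \<in> \<E>\<^sub>C"
    using exists_end_containing assms by metis
  hence "{\<E>\<^sub>A, \<E>\<^sub>B, \<E>\<^sub>C} \<subseteq> ends G" "card {\<E>\<^sub>A, \<E>\<^sub>B, \<E>\<^sub>C} = 3"
    using separate assms by (auto simp: ends_def)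
  thus ?thesis by (metis card_mono)
qed

lemma almost_equal_cases_if_at_most_two_ends:
  assumes ends: "finite (ends G)" "card (ends G) \<le> 2"
    and E: "almost_invariant G E" "infinite E" "infinite (carrier G - E)"
    and A: "almost_invariant G A"
  shows "finite A \<or> finite (carrier G - A) \<or> finite (sym_diff A E)
    \<or> finite (sym_diff A (carrier G - E))"
proof (rule ccontr)
  assume none: "\<not> ?thesis"
  define P1 P2 P3 P4 where "P1 = A \<inter> E" and "P2 = A \<inter> (carrier G - E)"
    and "P3 = (carrier G - A) \<inter> E" and "P4 = (carrier G - A) \<inter> (carrier G - E)"
  have sub: "A \<subseteq> carrier G" "E \<subseteq> carrier G" using A E by (auto simp: almost_invariant_def)
  have "almost_invariant G P1" "almost_invariant G P2" "almost_invariant G P3" "almost_invariant G P4"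
    unfolding P1_def P2_def P3_def P4_def
    using A E by (simp_all add: almost_invariant_Int almost_invariant_compl)
  moreover have "P1 \<inter> P2 = {}" "P1 \<inter> P3 = {}" "P1 \<inter> P4 = {}" "P2 \<inter> P3 = {}" "P2 \<inter> P4 = {}"
    "P3 \<inter> P4 = {}"
    by (auto simp: P1_def P2_def P3_def P4_def)
  moreover have "P1 \<union> P2 = A" "P3 \<union> P4 = carrier G - A" "P1 \<union> P3 = E" "P2 \<union> P4 = carrier G - E"
    "P2 \<union> P3 = sym_diff A E" "P1 \<union> P4 = sym_diff A (carrier G - E)"
    using sub by (auto simp: P1_def P2_def P3_def P4_def)
  hence "infinite (P1 \<union> P2)" "infinite (P3 \<union> P4)" "infinite (P1 \<union> P3)" "infinite (P2 \<union> P4)"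
    "infinite (P2 \<union> P3)" "infinite (P1 \<union> P4)"
    using none E by simp_all
  \<comment> \<open>every two of the four pieces have infinite union, so at most one piece is finite\<close>
  hence "(infinite P1 \<and> infinite P2 \<and> infinite P3) \<or> (infinite P1 \<and> infinite P2 \<and> infinite P4)
    \<or> (infinite P1 \<and> infinite P3 \<and> infinite P4) \<or> (infinite P2 \<and> infinite P3 \<and> infinite P4)"
    by (simp only: finite_Un) blast
  ultimately have "infinite (ends G) \<or> 3 \<le> card (ends G)"
    using three_disjoint_imp_three_ends by (elim disjE conjE) (simp_all add: Int_commute)
  thus False using ends by simp
qed

end

section \<open>Two-ended groups\<close>

locale two_ended = group G for G (structure) +
  fixes E :: "'a set"
  assumes almost_invariant_E: "almost_invariant G E"
    and infinite_E: "infinite E"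
    and infinite_compl_E: "infinite (carrier G - E)"
    and almost_equal_cases: "\<And>A. almost_invariant G A \<Longrightarrow> finite A \<or> finite (carrier G - A)
      \<or> finite (sym_diff A E) \<or> finite (sym_diff A (carrier G - E))"

lemma (in group) two_ended_if_two_ends:
  assumes "finite (ends G)" "card (ends G) = 2"
  shows "\<exists>E. two_ended G E"
proof -
  obtain \<E>\<^sub>1 \<E>\<^sub>2 where ends: "\<E>\<^sub>1 \<noteq> \<E>\<^sub>2" "ends G = {\<E>\<^sub>1, \<E>\<^sub>2}"
    using assms(2) by (meson card_2_iff)
  hence \<E>: "is_end G \<E>\<^sub>1" "is_end G \<E>\<^sub>2" by (auto simp: ends_def)
  hence "\<not> \<E>\<^sub>1 \<subseteq> \<E>\<^sub>2" using ends(1) unfolding is_end_def by blast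
  then obtain E where "E \<in> \<E>\<^sub>1" "E \<notin> \<E>\<^sub>2" by blast
  hence E: "almost_invariant G E" "infinite E" "infinite (carrier G - E)"
    using is_end_memD[OF \<E>(1)] cofinite_mem_end[OF \<E>(2)] by auto
  have "two_ended G E"
  proof unfold_locales
    fix A assume "almost_invariant G A"
    thus "finite A \<or> finite (carrier G - A) \<or> finite (sym_diff A E)
      \<or> finite (sym_diff A (carrier G - E))"
      using almost_equal_cases_if_at_most_two_ends[OF assms(1) _ E] assms(2) by simp
  qed (use E in auto)
  thus ?thesis ..
qed

context two_ended
begin

lemma E_subset: "E \<subseteq> carrier G"
  using almost_invariant_E by (simp add: almost_invariant_def)

lemma infinite_carrier: "infinite (carrier G)"
  using infinite_E E_subset finite_subset by blast

lemma not_almost_equal_E_and_compl: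
  assumes "finite (sym_diff A E)" "finite (sym_diff A (carrier G - E))"
  shows False
proof -
  have "finite (sym_diff E (carrier G - E))"
    using finite_sym_diff_trans[OF finite_sym_diff_commute[THEN iffD1, OF assms(1)] assms(2)] .
  moreover have "sym_diff E (carrier G - E) = carrier G" using E_subset by auto
  ultimately show False using infinite_carrier by simp
qed

lemma two_ended_compl: "two_ended G (carrier G - E)"
proof unfold_locales
  show "almost_invariant G (carrier G - E)" by (rule almost_invariant_compl[OF almost_invariant_E])
  show "infinite (carrier G - E)" by (rule infinite_compl_E)
  have double_compl: "carrier G - (carrier G - E) = E" using E_subset by blast
  thus "infinite (carrier G - (carrier G - E))" using infinite_E by simp
  fix A assume "almost_invariant G A"
  from almost_equal_cases[OF this]
  show "finite A \<or> finite (carrier G - A) \<or> finite (sym_diff A (carrier G - E))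
    \<or> finite (sym_diff A (carrier G - (carrier G - E)))"
    unfolding double_compl by blast
qed

definition stab :: "'a set" where
  "stab = {z \<in> carrier G. finite (sym_diff (z <# E) E)}"

lemma stab_subset: "stab \<subseteq> carrier G"
  by (auto simp: stab_def)

lemma mem_stab_iff: "z \<in> carrier G \<Longrightarrow> z \<in> stab \<longleftrightarrow> finite (sym_diff (z <# E) E)"
  by (simp add: stab_def)

lemma almost_equal_compl_iff_not_stab:
  assumes z: "z \<in> carrier G"
  shows "finite (sym_diff (z <# E) (carrier G - E)) \<longleftrightarrow> z \<notin> stab"
proof -
  have "almost_invariant G (z <# E)"
    using almost_invariant_l_coset[OF almost_invariant_E z] .
  moreover have "infinite (z <# E)" "infinite (carrier G - (z <# E))"
    using infinite_E infinite_compl_E finite_l_coset_iff[OF z] E_subset l_coset_compl[OF z E_subset]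
    by (metis Diff_subset)+
  ultimately have "finite (sym_diff (z <# E) E) \<or> finite (sym_diff (z <# E) (carrier G - E))"
    using almost_equal_cases by blast
  thus ?thesis
    using not_almost_equal_E_and_compl[of "z <# E"] z by (auto simp: stab_def)
qed

lemma mult_mem_stab_iff:
  assumes z: "z \<in> carrier G" and s: "s \<in> carrier G"
  shows "z \<otimes> s \<in> stab \<longleftrightarrow> (z \<in> stab \<longleftrightarrow> s \<in> stab)"
proof -
  have zs: "(z \<otimes> s) <# E = z <# (s <# E)"
    using lcos_m_assoc[OF E_subset z s] by simp
  have sE: "s <# E \<subseteq> carrier G" using l_coset_subset_G[OF E_subset s] .
  show ?thesis
  proof (cases "s \<in> stab")
    case True
    hence "finite (sym_diff (z <# (s <# E)) (z <# E))"
      using finite_sym_diff_l_coset_iff[OF z sE E_subset] by (simp add: stab_def)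
    hence "finite (sym_diff ((z \<otimes> s) <# E) E) \<longleftrightarrow> finite (sym_diff (z <# E) E)"
      unfolding zs by (meson finite_sym_diff_commute finite_sym_diff_trans)
    thus ?thesis using True mem_stab_iff[OF z] mem_stab_iff[OF m_closed[OF z s]] by blast
  next
    case False
    hence "finite (sym_diff (s <# E) (carrier G - E))"
      using almost_equal_compl_iff_not_stab[OF s] by simp
    hence "finite (sym_diff (z <# (s <# E)) (carrier G - (z <# E)))"
      using finite_sym_diff_l_coset_iff[OF z sE, of "carrier G - E"] l_coset_compl[OF z E_subset]
      by simp
    moreover have "sym_diff (carrier G - (z <# E)) E = sym_diff (z <# E) (carrier G - E)"
      using l_coset_subset_G[OF E_subset z] E_subset by auto
    ultimately have "finite (sym_diff ((z \<otimes> s) <# E) E) \<longleftrightarrow> z \<notin> stab"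
      unfolding zs almost_equal_compl_iff_not_stab[OF z, symmetric]
      by (metis finite_sym_diff_commute finite_sym_diff_trans)
    thus ?thesis using False mem_stab_iff[OF m_closed[OF z s]] by blast
  qed
qed

lemma subgroup_stab: "subgroup stab G"
proof (rule subgroupI)
  have "\<one> \<in> stab" using E_subset by (simp add: stab_def lcos_mult_one)
  thus "stab \<noteq> {}" by blast
  fix a b assume a: "a \<in> stab" and b: "b \<in> stab"
  show "a \<otimes> b \<in> stab"
    using a b stab_subset mult_mem_stab_iff by blast
  have "a \<otimes> inv a \<in> stab" using a stab_subset \<open>\<one> \<in> stab\<close> by auto
  thus "inv a \<in> stab"
    using a stab_subset mult_mem_stab_iff[of a "inv a"] by auto
qed (rule stab_subset)

lemma stab_finite_index:
  "\<exists>T. finite T \<and> T \<subseteq> carrier G \<and> (\<forall>y\<in>carrier G. \<exists>t\<in>T. y \<otimes> inv t \<in> stab)"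
proof (cases "carrier G \<subseteq> stab")
  case True
  thus ?thesis by (intro exI[of _ "{\<one>}"]) auto
next
  case False
  then obtain t where t: "t \<in> carrier G" "t \<notin> stab" by blast
  hence "inv t \<notin> stab" using subgroup.m_inv_closed[OF subgroup_stab] by fastforce
  hence "y \<otimes> inv t \<in> stab" if "y \<in> carrier G" "y \<notin> stab" for y
    using that t mult_mem_stab_iff[of y "inv t"] by simp
  thus ?thesis using t by (intro exI[of _ "{\<one>, t}"]) auto
qed

text \<open>The left translate \<open>z E\<close> is complemented when \<open>z\<close> swaps the two ends, so that it is always
  almost equal to \<open>E\<close>.\<close>

definition translate :: "'a \<Rightarrow> 'a set" where
  "translate z = (if z \<in> stab then z <# E else z <# (carrier G - E))"

lemma translate_subset: "z \<in> carrier G \<Longrightarrow> translate z \<subseteq> carrier G"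
  using E_subset by (simp add: translate_def l_coset_subset_G)

lemma finite_sym_diff_translate:
  assumes z: "z \<in> carrier G"
  shows "finite (sym_diff (translate z) E)"
proof (cases "z \<in> stab")
  case True
  thus ?thesis by (simp add: translate_def stab_def)
next
  case False
  have "sym_diff (translate z) E = sym_diff (z <# E) (carrier G - E)"
    using False l_coset_compl[OF z E_subset] l_coset_subset_G[OF E_subset z] E_subset
    by (auto simp: translate_def)
  thus ?thesis using almost_equal_compl_iff_not_stab[OF z] False by simp
qed

lemma translate_mult:
  assumes z: "z \<in> carrier G" and s: "s \<in> carrier G"
  shows "translate (z \<otimes> s) = z <# (if z \<in> stab then translate s else carrier G - translate s)"
proof -
  have assoc: "(z \<otimes> s) <# A = z <# (s <# A)" if "A \<subseteq> carrier G" for A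
    using lcos_m_assoc[OF that z s] by simp
  have compl: "s <# (carrier G - E) = carrier G - (s <# E)"
    "carrier G - (carrier G - (s <# E)) = s <# E"
    using l_coset_compl[OF s E_subset] l_coset_subset_G[OF E_subset s] by auto
  show ?thesis
    using mult_mem_stab_iff[OF z s] assoc[OF E_subset] assoc[of "carrier G - E"] compl
    by (cases "z \<in> stab"; cases "s \<in> stab") (simp_all add: translate_def)
qed

lemma sym_diff_translate_mult:
  assumes z: "z \<in> carrier G" and s: "s \<in> carrier G"
  shows "sym_diff (translate (z \<otimes> s)) (translate z) = z <# (sym_diff (translate s) E)"
proof (cases "z \<in> stab")
  case True
  thus ?thesis
    using translate_mult[OF z s] l_coset_sym_diff[OF z translate_subset[OF s] E_subset]
    by (simp add: translate_def)
next
  case False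
  have "sym_diff (carrier G - translate s) (carrier G - E) = sym_diff (translate s) E"
    using sym_diff_Diff_Diff[OF translate_subset[OF s] E_subset] .
  thus ?thesis
    using False translate_mult[OF z s] l_coset_sym_diff[OF z, of "carrier G - translate s" "carrier G - E"]
    by (simp add: translate_def)
qed

definition deficit :: "'a \<Rightarrow> nat" where
  "deficit z = card (E - translate z)"

definition excess :: "'a \<Rightarrow> nat" where
  "excess z = card (translate z - E)"

definition displacement :: "'a \<Rightarrow> int" where
  "displacement z = rel_card (translate z) E"

lemma displacement_eq: "displacement z = int (excess z) - int (deficit z)"
  by (simp add: displacement_def excess_def deficit_def rel_card_def)

lemma finite_deficit_change:
  assumes s: "s \<in> carrier G"
  shows "finite {z \<in> carrier G - E. deficit (z \<otimes> s) \<noteq> deficit z}"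
proof -
  define D where "D = sym_diff (translate s) E"
  have D: "finite D" "D \<subseteq> carrier G"
    using finite_sym_diff_translate[OF s] translate_subset[OF s] E_subset by (auto simp: D_def)
  have "{z \<in> carrier G - E. deficit (z \<otimes> s) \<noteq> deficit z} \<subseteq> (\<Union>d\<in>D. coboundary G E d)"
  proof
    fix z assume z: "z \<in> {z \<in> carrier G - E. deficit (z \<otimes> s) \<noteq> deficit z}"
    show "z \<in> (\<Union>d\<in>D. coboundary G E d)"
    proof (rule ccontr)
      assume "z \<notin> (\<Union>d\<in>D. coboundary G E d)"
      hence "(z <# D) \<inter> E = {}"
        using z by (auto simp: coboundary_def l_coset_def)
      moreover have "sym_diff (translate (z \<otimes> s)) (translate z) = z <# D"
        using sym_diff_translate_mult[OF _ s] z by (simp add: D_def)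
      ultimately have "E - translate (z \<otimes> s) = E - translate z" by blast
      thus False using z by (simp add: deficit_def)
    qed
  qed
  moreover have "finite (\<Union>d\<in>D. coboundary G E d)"
    using D almost_invariant_E by (auto simp: almost_invariant_def)
  ultimately show ?thesis by (rule finite_subset)
qed

lemma almost_invariant_deficit_vimage:
  "almost_invariant G {z \<in> carrier G - E. deficit z \<in> J}"
  unfolding almost_invariant_def
proof (intro conjI ballI)
  fix t assume t: "t \<in> carrier G"
  have "coboundary G {z \<in> carrier G - E. deficit z \<in> J} t
      \<subseteq> coboundary G E t \<union> {z \<in> carrier G - E. deficit (z \<otimes> t) \<noteq> deficit z}"
    using t by (auto simp: coboundary_def)
  moreover have "finite (coboundary G E t)"
    using almost_invariant_E t by (simp add: almost_invariant_def)
  ultimately show "finite (coboundary G {z \<in> carrier G - E. deficit z \<in> J} t)"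
    using finite_deficit_change[OF t] by (meson finite_UnI finite_subset)
qed auto

lemma finite_or_cofinite_in_compl:
  assumes A: "almost_invariant G A" "A \<subseteq> carrier G - E"
  shows "finite A \<or> finite (carrier G - E - A)"
proof -
  have "E \<subseteq> carrier G - A" "E \<subseteq> sym_diff A E" using A(2) E_subset by auto
  hence "infinite (carrier G - A)" "infinite (sym_diff A E)"
    using infinite_E finite_subset by blast+
  moreover have "sym_diff A (carrier G - E) = carrier G - E - A" using A(2) by auto
  ultimately show ?thesis using almost_equal_cases[OF A(1)] by auto
qed

lemma finite_deficit_image: "finite (deficit ` (carrier G - E))"
  \<comment> \<open>otherwise splitting the values into two infinite halves gives an almost invariant
    subset of \<open>G - E\<close> that is neither finite nor cofinite there\<close>
proof (rule ccontr)
  assume "infinite (deficit ` (carrier G - E))"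
  then obtain J where J: "J \<subseteq> deficit ` (carrier G - E)" "infinite J"
    "infinite (deficit ` (carrier G - E) - J)"
    using infinite_split by blast
  define P where "P = {z \<in> carrier G - E. deficit z \<in> J}"
  have "deficit ` P = J" using J(1) by (auto simp: P_def)
  hence "infinite P" using J(2) by blast
  moreover have "deficit ` (carrier G - E) - J \<subseteq> deficit ` (carrier G - E - P)"
    by (auto simp: P_def)
  hence "infinite (carrier G - E - P)" using J(3) by (meson finite_imageI finite_subset)
  ultimately show False
    using finite_or_cofinite_in_compl[OF almost_invariant_deficit_vimage[of J]] by (auto simp: P_def)
qed

lemma finite_excess_less: "finite {z \<in> carrier G - E. excess z < n}"
  \<comment> \<open>off finitely many coboundaries, \<open>z\<close> maps \<open>n\<close> fixed points of \<open>E\<close> (or of \<open>G - E\<close>)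
    into \<open>translate z - E\<close>\<close>
proof -
  obtain A where A: "finite A" "card A = n" "A \<subseteq> E"
    using infinite_arbitrarily_large[OF infinite_E] by blast
  obtain B where B: "finite B" "card B = n" "B \<subseteq> carrier G - E"
    using infinite_arbitrarily_large[OF infinite_compl_E] by blast
  have "{z \<in> carrier G - E. excess z < n} \<subseteq> (\<Union>x\<in>A \<union> B. coboundary G E x)"
  proof
    fix z assume z: "z \<in> {z \<in> carrier G - E. excess z < n}"
    show "z \<in> (\<Union>x\<in>A \<union> B. coboundary G E x)"
    proof (rule ccontr)
      assume "z \<notin> (\<Union>x\<in>A \<union> B. coboundary G E x)"
      hence out: "z \<otimes> x \<notin> E" if "x \<in> A \<union> B" for x
        using z that by (auto simp: coboundary_def)
      define W where "W = (if z \<in> stab then A else B)"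
      have zc: "z \<in> carrier G" using z by simp
      have W: "W \<subseteq> carrier G" "card W = n" using A B E_subset by (auto simp: W_def)
      have "z <# W \<subseteq> translate z - E"
        using out A(3) B(3) by (auto simp: W_def translate_def l_coset_def)
      moreover have "finite (translate z - E)" using finite_sym_diff_translate[OF zc] by simp
      ultimately have "card (z <# W) \<le> excess z" by (simp add: excess_def card_mono)
      thus False using z card_l_coset[OF zc W(1)] W(2) by simp
    qed
  qed
  moreover have "finite (\<Union>x\<in>A \<union> B. coboundary G E x)"
    using A B E_subset almost_invariant_E by (auto simp: almost_invariant_def)
  ultimately show ?thesis by (rule finite_subset)
qed

lemma finite_displacement_le: "finite {z \<in> carrier G - E. displacement z \<le> n}"
proof -
  define M where "M = Max (deficit ` (carrier G - E))"
  have "deficit z \<le> M" if "z \<in> carrier G - E" for z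
    using finite_deficit_image that by (simp add: M_def)
  hence "{z \<in> carrier G - E. displacement z \<le> n}
      \<subseteq> {z \<in> carrier G - E. excess z < nat (n + int M) + 1}"
    by (force simp: displacement_eq)
  thus ?thesis using finite_excess_less finite_subset by blast
qed

lemma stab_compl: "two_ended.stab G (carrier G - E) = stab"
proof -
  have eq: "sym_diff (z <# (carrier G - E)) (carrier G - E) = sym_diff (z <# E) E"
    if "z \<in> carrier G" for z
    using l_coset_compl[OF that E_subset] sym_diff_Diff_Diff[OF l_coset_subset_G[OF E_subset that] E_subset]
    by simp
  show ?thesis
    unfolding two_ended.stab_def[OF two_ended_compl] stab_def
    by (rule Collect_cong) (metis eq)
qed

lemma translate_compl:
  assumes z: "z \<in> carrier G"
  shows "two_ended.translate G (carrier G - E) z = carrier G - translate z"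
proof -
  have "carrier G - (carrier G - E) = E" using E_subset by blast
  thus ?thesis
    using l_coset_compl[OF z E_subset] l_coset_subset_G[OF E_subset z]
    by (auto simp: two_ended.translate_def[OF two_ended_compl] stab_compl translate_def)
qed

lemma displacement_compl:
  assumes z: "z \<in> carrier G"
  shows "two_ended.displacement G (carrier G - E) z = - displacement z"
  using rel_card_Diff_Diff[OF translate_subset[OF z] E_subset]
  by (simp add: two_ended.displacement_def[OF two_ended_compl] translate_compl[OF z] displacement_def)

lemma finite_abs_displacement_le: "finite {z \<in> carrier G. \<bar>displacement z\<bar> \<le> n}"
proof -
  interpret compl: two_ended G "carrier G - E" by (rule two_ended_compl)
  have "{z \<in> carrier G. \<bar>displacement z\<bar> \<le> n} \<subseteq> {z \<in> carrier G - E. displacement z \<le> n}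
      \<union> {z \<in> carrier G - (carrier G - E). compl.displacement z \<le> n}"
    using displacement_compl by auto
  thus ?thesis
    by (rule finite_subset) (intro finite_UnI finite_displacement_le compl.finite_displacement_le)
qed

lemma displacement_mult:
  assumes z: "z \<in> stab" and w: "w \<in> carrier G"
  shows "displacement (z \<otimes> w) = displacement z + displacement w"
proof -
  have zc: "z \<in> carrier G" using z stab_subset by blast
  have tz: "translate z = z <# E" and tzw: "translate (z \<otimes> w) = z <# translate w"
    using z translate_mult[OF zc w] by (simp_all add: translate_def)
  have "finite (sym_diff (z <# translate w) (z <# E))"
    using finite_sym_diff_l_coset_iff[OF zc translate_subset[OF w] E_subset]
      finite_sym_diff_translate[OF w] by simp
  moreover have "finite (sym_diff (z <# E) E)" using z by (simp add: stab_def)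
  ultimately have "displacement (z \<otimes> w) = rel_card (z <# translate w) (z <# E) + rel_card (z <# E) E"
    unfolding displacement_def tzw by (rule rel_card_trans)
  also have "\<dots> = displacement w + displacement z"
    using rel_card_l_coset[OF zc translate_subset[OF w] E_subset] tz
    by (simp add: displacement_def)
  finally show ?thesis by simp
qed

lemma displacement_hom: "displacement \<in> hom (G\<lparr>carrier := stab\<rparr>) integer_group"
  unfolding hom_def by (simp add: displacement_mult subsetD[OF stab_subset])

end

section \<open>Homomorphisms to the integers with finite kernel\<close>

context group
begin

lemma hom_integer_group_int_pow:
  assumes H: "subgroup H G" and f: "f \<in> hom (G\<lparr>carrier := H\<rparr>) integer_group" and x: "x \<in> H"
  shows "f (x [^] (q::int)) = q * f x"
proof -
  have "group (G\<lparr>carrier := H\<rparr>)" using subgroup.subgroup_is_group[OF H is_group] .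
  hence "f (x [^]\<^bsub>G\<lparr>carrier := H\<rparr>\<^esub> q) = f x [^]\<^bsub>integer_group\<^esub> q"
    using hom_int_pow[OF f _ _ group_integer_group] x by simp
  thus ?thesis using int_pow_consistent[OF H x] by simp
qed

lemma infinite_generate_if_hom_integer_group:
  assumes H: "subgroup H G" and f: "f \<in> hom (G\<lparr>carrier := H\<rparr>) integer_group"
    and h: "h \<in> H" "f h \<noteq> 0"
  shows "infinite (generate G {h})"
proof -
  have "inj (\<lambda>q::int. h [^] q)"
  proof (rule injI)
    fix q q' :: int assume "h [^] q = h [^] q'"
    hence "q * f h = q' * f h" using hom_integer_group_int_pow[OF H f h(1)] by metis
    thus "q = q'" using h(2) by simp
  qed
  hence "infinite (range (\<lambda>q::int. h [^] q))"
    by (simp add: finite_image_iff infinite_UNIV_int)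
  moreover have "range (\<lambda>q::int. h [^] q) \<subseteq> generate G {h}"
    using generate_pow[of h] h(1) subgroup.subset[OF H] by blast
  ultimately show ?thesis using finite_subset by blast
qed

lemma generator_modulo_kernel:
  assumes H: "subgroup H G" and f: "f \<in> hom (G\<lparr>carrier := H\<rparr>) integer_group"
    and nonzero: "h\<^sub>0 \<in> H" "f h\<^sub>0 \<noteq> 0"
  shows "\<exists>h\<in>H. f h \<noteq> 0 \<and> (\<forall>y\<in>H. \<exists>q::int. \<exists>k\<in>H. f k = 0 \<and> y = h [^] q \<otimes> k)"
proof -
  have Hc: "H \<subseteq> carrier G" using subgroup.subset[OF H] .
  have mult: "f (x \<otimes> y) = f x + f y" if "x \<in> H" "y \<in> H" for x y
    using f that by (simp add: hom_def)
  note pow = hom_integer_group_int_pow[OF H f]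
  have "f (h\<^sub>0 [^] sgn (f h\<^sub>0)) = \<bar>f h\<^sub>0\<bar>"
    by (simp only: pow[OF nonzero(1)] abs_sgn[of "f h\<^sub>0"] mult.commute)
  hence "\<exists>n::nat. 0 < n \<and> (\<exists>h\<in>H. f h = int n)"
    using nonzero(2) subgroup_int_pow_closed[OF H nonzero(1)]
    by (intro exI[of _ "nat \<bar>f h\<^sub>0\<bar>"] conjI bexI[of _ "h\<^sub>0 [^] sgn (f h\<^sub>0)"]) simp_all
  \<comment> \<open>the least positive value of \<open>f\<close> generates its image\<close>
  define d where "d = (LEAST n::nat. 0 < n \<and> (\<exists>h\<in>H. f h = int n))"
  obtain h where h: "h \<in> H" "f h = int d" and d: "0 < d"
    using LeastI_ex[OF \<open>\<exists>n. _\<close>] unfolding d_def[symmetric] by blast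
  have d_min: "int d \<le> f k" if "k \<in> H" "0 < f k" for k
  proof -
    have "d \<le> nat (f k)" unfolding d_def using that by (intro Least_le) auto
    thus ?thesis using that(2) by (simp add: le_nat_iff)
  qed
  have "\<exists>q::int. \<exists>k\<in>H. f k = 0 \<and> y = h [^] q \<otimes> k" if y: "y \<in> H" for y
  proof (intro exI bexI conjI)
    define q where "q = f y div int d"
    let ?k = "h [^] (- q) \<otimes> y"
    show kH: "?k \<in> H" using subgroup_int_pow_closed[OF H h(1)] y subgroup.m_closed[OF H] by blast
    have "f ?k = f y mod int d"
      using mult[OF subgroup_int_pow_closed[OF H h(1)] y] pow[OF h(1)] h(2)
      by (simp add: q_def minus_div_mult_eq_mod[symmetric])
    hence "0 \<le> f ?k" "f ?k < int d" using d by simp_all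
    thus "f ?k = 0" using d_min[OF kH] by fastforce
    have hc: "h \<in> carrier G" and yc: "y \<in> carrier G" using h(1) y Hc by auto
    have "h [^] q \<otimes> ?k = (h [^] q \<otimes> h [^] (- q)) \<otimes> y" by (simp add: m_assoc hc yc)
    also have "\<dots> = y" using int_pow_mult[OF hc, of q "- q", symmetric] yc by simp
    finally show "y = h [^] q \<otimes> ?k" ..
  qed
  moreover have "f h \<noteq> 0" using h(2) d by simp
  ultimately show ?thesis using h(1) by blast
qed

lemma virtually_infinite_cyclic_if_covered:
  assumes h: "h \<in> carrier G" "infinite (generate G {h})"
    and R: "finite R" "R \<subseteq> carrier G"
    and cover: "\<And>y. y \<in> carrier G \<Longrightarrow> \<exists>q::int. \<exists>r\<in>R. y = h [^] q \<otimes> r"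
  shows "(\<exists>S. finite S \<and> S \<subseteq> carrier G \<and> generate G S = carrier G)
    \<and> (\<exists>g\<in>carrier G. infinite (generate G {g}) \<and> finite (rcosets (generate G {g})))"
proof
  have pow: "h [^] (q::int) \<in> generate G {h}" for q
    using generate_pow[OF h(1)] by blast
  have "carrier G \<subseteq> generate G (insert h R)"
  proof
    fix y assume "y \<in> carrier G"
    then obtain q r where r: "r \<in> R" "y = h [^] (q::int) \<otimes> r" using cover by blast
    have "h [^] q \<in> generate G (insert h R)"
      using pow mono_generate[of "{h}" "insert h R"] by blast
    moreover have "r \<in> generate G (insert h R)" using r(1) by (simp add: generate.incl)
    ultimately show "y \<in> generate G (insert h R)" using r(2) by (simp add: generate.eng)
  qed
  hence "generate G (insert h R) = carrier G"
    using generate_incl[of "insert h R"] R(2) h(1) by blast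
  thus "\<exists>S. finite S \<and> S \<subseteq> carrier G \<and> generate G S = carrier G"
    using R h(1) by (intro exI[of _ "insert h R"]) simp
  have "rcosets (generate G {h}) \<subseteq> (\<lambda>r. generate G {h} #> r) ` R"
  proof
    fix M assume "M \<in> rcosets (generate G {h})"
    then obtain a where a: "a \<in> carrier G" "M = generate G {h} #> a"
      unfolding RCOSETS_def by blast
    obtain q r where r: "r \<in> R" "a = h [^] (q::int) \<otimes> r" using cover[OF a(1)] by blast
    hence "a \<in> generate G {h} #> r" using pow by (auto simp: r_coset_def)
    hence "generate G {h} #> r = M"
      using repr_independence[of a _ r] r(1) R(2) a(2) generate_is_subgroup[of "{h}"] h(1) by auto
    thus "M \<in> (\<lambda>r. generate G {h} #> r) ` R" using r(1) by blast
  qed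
  hence "finite (rcosets (generate G {h}))" using R(1) finite_subset by blast
  thus "\<exists>g\<in>carrier G. infinite (generate G {g}) \<and> finite (rcosets (generate G {g}))"
    using h by blast
qed

lemma virtually_infinite_cyclic_if_hom_to_integer_group:
  assumes H: "subgroup H G" and f: "f \<in> hom (G\<lparr>carrier := H\<rparr>) integer_group"
    and kernel: "finite {x \<in> H. f x = 0}"
    and T: "finite T" "T \<subseteq> carrier G" "\<And>y. y \<in> carrier G \<Longrightarrow> \<exists>t\<in>T. y \<otimes> inv t \<in> H"
    and infinite: "infinite (carrier G)"
  shows "(\<exists>S. finite S \<and> S \<subseteq> carrier G \<and> generate G S = carrier G)
    \<and> (\<exists>g\<in>carrier G. infinite (generate G {g}) \<and> finite (rcosets (generate G {g})))"
proof -
  define K where "K = {x \<in> H. f x = 0}"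
  have Hc: "H \<subseteq> carrier G" using subgroup.subset[OF H] .
  have cover: "\<exists>x\<in>H. \<exists>t\<in>T. y = x \<otimes> t" if y: "y \<in> carrier G" for y
  proof -
    obtain t where t: "t \<in> T" "y \<otimes> inv t \<in> H" using T(3)[OF y] by blast
    hence "y = (y \<otimes> inv t) \<otimes> t" using y T(2) by (auto simp: m_assoc)
    thus ?thesis using t by blast
  qed
  have "infinite H"
  proof
    assume "finite H"
    hence "finite ((\<lambda>(x, t). x \<otimes> t) ` (H \<times> T))" using T(1) by simp
    moreover have "carrier G \<subseteq> (\<lambda>(x, t). x \<otimes> t) ` (H \<times> T)" using cover by fast
    ultimately show False using infinite finite_subset by blast
  qed
  hence "\<not> H \<subseteq> {x \<in> H. f x = 0}" using kernel finite_subset by blast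
  then obtain h\<^sub>0 where "h\<^sub>0 \<in> H" "f h\<^sub>0 \<noteq> 0" by blast
  then obtain h where h: "h \<in> H" "f h \<noteq> 0"
    and decomp: "\<forall>y\<in>H. \<exists>q::int. \<exists>k\<in>H. f k = 0 \<and> y = h [^] q \<otimes> k"
    using generator_modulo_kernel[OF H f] by blast
  have infinite_h: "infinite (generate G {h})"
    using infinite_generate_if_hom_integer_group[OF H f h] .
  define R where "R = (\<lambda>(k, t). k \<otimes> t) ` (K \<times> T)"
  have R: "finite R" "R \<subseteq> carrier G"
    using kernel T(1,2) Hc by (auto simp: R_def K_def)
  have cover_R: "\<exists>q::int. \<exists>r\<in>R. y = h [^] q \<otimes> r" if y: "y \<in> carrier G" for y
  proof -
    obtain x t where xt: "x \<in> H" "t \<in> T" "y = x \<otimes> t" using cover[OF y] by blast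
    obtain q k where qk: "k \<in> K" "x = h [^] (q::int) \<otimes> k"
      using decomp xt(1) unfolding K_def by blast
    have "k \<in> carrier G" "t \<in> carrier G" "h \<in> carrier G"
      using qk(1) xt(2) h(1) Hc T(2) by (auto simp: K_def)
    hence "y = h [^] q \<otimes> (k \<otimes> t)" using xt(3) qk(2) by (simp add: m_assoc)
    moreover have "k \<otimes> t \<in> R" using qk(1) xt(2) by (auto simp: R_def)
    ultimately show ?thesis by blast
  qed
  show ?thesis
    using h(1) Hc by (intro virtually_infinite_cyclic_if_covered[OF _ infinite_h R cover_R]) auto
qed

end

theorem theorem9p16:
  fixes G :: "('a, 'b) monoid_scheme"
  assumes "group G"
    and "finite (ends G)" and "card (ends G) = 2"
  shows "(\<exists>S. finite S \<and> S \<subseteq> carrier G \<and> generate G S = carrier G)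
     \<and> (\<exists>g\<in>carrier G. infinite (generate G {g}) \<and> finite (rcosets\<^bsub>G\<^esub> (generate G {g})))"
proof -
  interpret group G by (rule assms(1))
  obtain E where "two_ended G E" using two_ended_if_two_ends assms(2,3) by blast
  then interpret two_ended G E .
  obtain T where T: "finite T" "T \<subseteq> carrier G"
    "\<forall>y\<in>carrier G. \<exists>t\<in>T. y \<otimes>\<^bsub>G\<^esub> inv\<^bsub>G\<^esub> t \<in> stab"
    using stab_finite_index by blast
  have "{z \<in> stab. displacement z = 0} \<subseteq> {z \<in> carrier G. \<bar>displacement z\<bar> \<le> 0}"
    using stab_subset by auto
  hence "finite {z \<in> stab. displacement z = 0}"
    using finite_abs_displacement_le finite_subset by blast
  thus ?thesis
    using virtually_infinite_cyclic_if_hom_to_integer_group[OF subgroup_stab displacement_hom _ T(1,2)]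
      T(3) infinite_carrier by blast
qed

end
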